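(* Let $M=15$, let $1\le i_1<i_2<\dots<i_k$ and $j_1,\dots,j_k$ be positive integers such that $i_{l+1}-i_l\ge j_l$ for each $1\le l<k$. Then $\widehat Q_{i_1\cdots i_k}^{j_1\cdots j_k}$ consists of at most $M^k2^{\,i_k-j_1-j_2-\cdots-j_{k-1}}$ intervals in $\mathcal D_{i_k+j_k}$.
   Context: $\mathbb T=\mathbb R/\mathbb Z\cong[0,1)$, $Tx=2x\bmod1$, $d$ the usual distance on $\mathbb T$. $\mathcal D_n$ is the collection of dyadic intervals $[m/2^n,(m+1)/2^n)$. For $i,j\ge1$, $Q_i^j=\{x:d(T^ix,x)\le2^{-j}\}$ and $\widehat Q_i^j$ is the union of all intervals of $\mathcal D_{i+j}$ that intersect $Q_i^j$. Then $\widehat Q_{i_1\cdots i_k}^{j_1\cdots j_k}:=\bigcap_{\nu=1}^k\widehat Q_{i_\nu}^{j_\nu}$. *)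

theory Defs
  imports Complex_Main
begin

text \<open>The circle T = R/Z is represented by [0,1).\<close>

definition Tmap :: "real \<Rightarrow> real" where
  "Tmap x = frac (2 * x)"

definition dT :: "real \<Rightarrow> real \<Rightarrow> real" where
  "dT x y = min (frac (x - y)) (1 - frac (x - y))"

definition dyad :: "nat \<Rightarrow> nat \<Rightarrow> real set" where
  "dyad n m = {real m / 2 ^ n ..< (real m + 1) / 2 ^ n}"

definition Dn :: "nat \<Rightarrow> real set set" where
  "Dn n = dyad n ` {..<2 ^ n}"

definition Q :: "nat \<Rightarrow> nat \<Rightarrow> real set" where
  "Q i j = {x \<in> {0..<1}. dT ((Tmap ^^ i) x) x \<le> (1/2) ^ j}"

definition Qhat :: "nat \<Rightarrow> nat \<Rightarrow> real set" where
  "Qhat i j = \<Union> {I \<in> Dn (i + j). I \<inter> Q i j \<noteq> {}}"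

text \<open>Intersection of Qhat (i l) (j l) over l < k (0-indexed).\<close>
definition Qhat_inter :: "nat \<Rightarrow> (nat \<Rightarrow> nat) \<Rightarrow> (nat \<Rightarrow> nat) \<Rightarrow> real set" where
  "Qhat_inter k i j = (\<Inter> l \<in> {..<k}. Qhat (i l) (j l))"

end

theory Submission
  imports Defs
begin

text \<open>Since T^i x = 2^i x mod 1, a point x lies in Q i j iff (2^i - 1) x is within 2^-j of
an integer p. Rescaled by 2^(i+j), the index m of the level-(i+j) dyadic interval around such
an x satisfies (2^i - 1) m = p 2^(i+j) + O(2^i), so the admissible indices come in clusters of
at most 6 consecutive integers, one cluster per p. Inside a dyadic interval of level n \<le> i
the quantity (2^i - 1) m varies by less than 2^(i-n) 2^(i+j), so at most 2^(i-n) + 1 clusters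
meet it: at most 12 * 2^(i-n) admissible indices. The gap condition
i_l + j_l \<le> i_(l+1) makes each Qhat a union of intervals of the finest level, and counting
descendants level by level yields at most 12^k 2^(i_k - j_1 - ... - j_(k-1)) of them.\<close>

lemma frac_of_nat_mult_frac: "frac (of_nat n * frac x) = frac (of_nat n * (x::real))"
proof -
  have "of_nat n * frac x = of_nat n * x + of_int (- int n * \<lfloor>x\<rfloor>)"
    by (simp add: frac_def algebra_simps)
  then show ?thesis by (simp only: frac_add_of_int_right)
qed

lemma funpow_Tmap: "x \<in> {0..<1} \<Longrightarrow> (Tmap ^^ n) x = frac (2 ^ n * x)"
  using frac_of_nat_mult_frac[of 2]
  by (induction n) (simp_all add: Tmap_def mult.assoc)

lemma dT_le_imp_near_int:
  assumes "dT a b \<le> \<delta>"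
  obtains p :: int where "\<bar>a - b - of_int p\<bar> \<le> \<delta>"
proof (cases "frac (a - b) \<le> 1 - frac (a - b)")
  case True
  then have "frac (a - b) \<le> \<delta>" using assms by (simp add: dT_def)
  then show ?thesis by (intro that[of "\<lfloor>a - b\<rfloor>"]) (simp add: frac_def)
next
  case False
  then have "1 - frac (a - b) \<le> \<delta>" using assms by (simp add: dT_def)
  then show ?thesis using frac_lt_1[of "a - b"] by (intro that[of "\<lfloor>a - b\<rfloor> + 1"]) (simp add: frac_def)
qed

lemma mem_dyad_iff: "x \<in> dyad n m \<longleftrightarrow> 0 \<le> x \<and> \<lfloor>2^n * x\<rfloor> = int m"
proof -
  have "x \<in> dyad n m \<longleftrightarrow> \<lfloor>2^n * x\<rfloor> = int m"
    by (simp add: dyad_def floor_eq_iff field_simps)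
  moreover have "0 \<le> x" if "\<lfloor>2^n * x\<rfloor> = int m"
  proof -
    have "0 \<le> 2^n * x" using that by (metis of_nat_0_le_iff zero_le_floor)
    then show ?thesis by (simp add: zero_le_mult_iff) (meson not_le zero_less_numeral zero_less_power)
  qed
  ultimately show ?thesis by blast
qed

lemma dyad_unique: "x \<in> dyad n m \<Longrightarrow> x \<in> dyad n m' \<Longrightarrow> m = m'"
  by (simp add: mem_dyad_iff)

lemma left_endpoint_mem_dyad: "real m / 2^n \<in> dyad n m"
  by (simp add: dyad_def divide_right_mono divide_strict_right_mono)

lemma mem_dyad_floor:
  assumes "x \<in> {0..<1}"
  shows "nat \<lfloor>2^n * x\<rfloor> < 2^n" "x \<in> dyad n (nat \<lfloor>2^n * x\<rfloor>)"
proof -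
  have "\<lfloor>2^n * x\<rfloor> < 2^n" using assms by (simp add: floor_less_iff)
  then show "nat \<lfloor>2^n * x\<rfloor> < 2^n" by (simp add: nat_less_iff)
  show "x \<in> dyad n (nat \<lfloor>2^n * x\<rfloor>)" using assms by (simp add: mem_dyad_iff)
qed

lemma dyad_subset_unit: "m < 2^n \<Longrightarrow> dyad n m \<subseteq> {0..<1}"
proof
  fix x assume "m < 2^n" and x: "x \<in> dyad n m"
  then have "real m + 1 \<le> 2^n"
    by (metis Suc_leI add.commute of_nat_Suc of_nat_le_iff of_nat_numeral of_nat_power)
  then have "(real m + 1) / 2^n \<le> 1" by simp
  moreover have "0 \<le> real m / 2^n" by simp
  moreover have "real m / 2^n \<le> x" "x < (real m + 1) / 2^n" using x by (auto simp: dyad_def)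
  ultimately show "x \<in> {0..<1}" unfolding atLeastLessThan_iff by linarith
qed

lemma dyad_subset_dyad_div:
  assumes "n \<le> N"
  shows "dyad N m \<subseteq> dyad n (m div 2^(N - n))"
proof
  fix x assume "x \<in> dyad N m"
  then have x: "0 \<le> x" "\<lfloor>2^N * x\<rfloor> = int m" by (auto simp: mem_dyad_iff)
  have "(2::real)^N = 2^n * 2^(N - n)"
    using assms by (simp flip: power_add)
  then have "2^n * x = 2^N * x / real_of_int (2^(N - n))" by simp
  moreover have "\<lfloor>2^N * x / real_of_int (2^(N - n))\<rfloor> = \<lfloor>2^N * x\<rfloor> div 2^(N - n)"
    by (rule floor_divide_real_eq_div) simp
  ultimately have "\<lfloor>2^n * x\<rfloor> = int m div 2^(N - n)"
    using x by simp
  then show "x \<in> dyad n (m div 2^(N - n))"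
    using x by (simp add: mem_dyad_iff zdiv_int)
qed

lemma dyad_parent_eq:
  "n \<le> N \<Longrightarrow> x \<in> dyad N m \<Longrightarrow> x \<in> dyad n m' \<Longrightarrow> m' = m div 2^(N - n)"
  using dyad_subset_dyad_div dyad_unique by blast

text \<open>Scaling (2^i - 1) x \<in> [p - 2^-j, p + 2^-j] by 2^(i+j) for x in the interval of index m
gives these bounds; the lower one loses 2^i - 1 because m \<le> 2^(i+j) x < m + 1.\<close>

definition Qcluster :: "nat \<Rightarrow> nat \<Rightarrow> int \<Rightarrow> nat set" where
  "Qcluster i j p =
     {m. p * 2^(i+j) - 2^(i+1) + 1 \<le> (2^i - 1) * int m \<and> (2^i - 1) * int m \<le> p * 2^(i+j) + 2^i}"

definition Qindex :: "nat \<Rightarrow> nat \<Rightarrow> nat set" where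
  "Qindex i j = (\<Union>p. Qcluster i j p)"

lemma dyad_meets_Q_imp_Qindex:
  assumes xm: "x \<in> dyad (i+j) m" and xQ: "x \<in> Q i j"
  shows "m \<in> Qindex i j"
proof -
  have "x \<in> {0..<1}" "dT (frac (2^i * x)) x \<le> (1/2)^j"
    using xQ by (auto simp: Q_def funpow_Tmap)
  then obtain p :: int where p: "\<bar>frac (2^i * x) - x - of_int p\<bar> \<le> (1/2)^j"
    using dT_le_imp_near_int by blast
  define P where "P = p + \<lfloor>2^i * x\<rfloor>"
  define u where "u = 2^(i+j) * x"
  have "(2^i - 1) * u - of_int P * 2^(i+j) = 2^(i+j) * ((2^i - 1) * x - of_int P)"
    unfolding u_def by (simp add: algebra_simps)
  then have "\<bar>(2^i - 1) * u - of_int P * 2^(i+j)\<bar> = 2^(i+j) * \<bar>(2^i - 1) * x - of_int P\<bar>"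
    by (simp add: abs_mult)
  also have "\<dots> \<le> 2^(i+j) * (1/2)^j"
    using p by (intro mult_left_mono) (auto simp: P_def frac_def algebra_simps)
  also have "\<dots> = 2^i" by (simp add: power_add power_one_over)
  finally have near: "\<bar>(2^i - 1) * u - of_int P * 2^(i+j)\<bar> \<le> (2::real)^i" .
  have "real m \<le> u" "u < real m + 1" using xm by (auto simp: dyad_def u_def field_simps)
  then have "(2^i - 1) * real m \<le> (2^i - 1) * u" "(2^i - 1) * u \<le> (2^i - 1) * (real m + 1)"
    by (simp_all add: mult_left_mono)
  then have "real_of_int (P * 2^(i+j) - 2^(i+1) + 1) \<le> real_of_int ((2^i - 1) * int m)"
    "real_of_int ((2^i - 1) * int m) \<le> real_of_int (P * 2^(i+j) + 2^i)"
    using near by (auto simp: algebra_simps abs_le_iff)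
  then have "m \<in> Qcluster i j P" unfolding Qcluster_def of_int_le_iff by blast
  then show ?thesis unfolding Qindex_def by blast
qed

lemma Qhat_subset_unit: "Qhat i j \<subseteq> {0..<1}"
  unfolding Qhat_def Dn_def using dyad_subset_unit by blast

lemma dyad_subset_Qhat:
  assumes "i + j \<le> N" "x \<in> dyad N m" "x \<in> Qhat i j"
  shows "dyad N m \<subseteq> Qhat i j"
proof -
  obtain m' where "m' < 2^(i+j)" "x \<in> dyad (i+j) m'" "dyad (i+j) m' \<inter> Q i j \<noteq> {}"
    using assms(3) unfolding Qhat_def Dn_def by blast
  moreover have "dyad N m \<subseteq> dyad (i+j) m'"
    using dyad_subset_dyad_div dyad_parent_eq assms(1,2) calculation(2) by metis
  ultimately show ?thesis unfolding Qhat_def Dn_def by blast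
qed

lemma dyad_subset_Qhat_imp_Qindex:
  assumes "i + j \<le> N" "dyad N m \<subseteq> Qhat i j"
  shows "m div 2^(N - (i+j)) \<in> Qindex i j"
proof -
  obtain m' y where m': "real m / 2^N \<in> dyad (i+j) m'" "y \<in> dyad (i+j) m'" "y \<in> Q i j"
    using assms(2) left_endpoint_mem_dyad[of m N] unfolding Qhat_def Dn_def by blast
  then have "m' = m div 2^(N - (i+j))"
    using dyad_parent_eq assms(1) left_endpoint_mem_dyad by blast
  then show ?thesis using dyad_meets_Q_imp_Qindex m' by blast
qed

lemma Qhat_inter_eq_Union_Dn:
  assumes "k \<ge> 1" and levels: "\<And>l. l < k \<Longrightarrow> i l + j l \<le> N"
  shows "Qhat_inter k i j = \<Union>{I \<in> Dn N. I \<subseteq> Qhat_inter k i j}"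
proof
  show "Qhat_inter k i j \<subseteq> \<Union>{I \<in> Dn N. I \<subseteq> Qhat_inter k i j}"
  proof
    fix x assume x: "x \<in> Qhat_inter k i j"
    then have "x \<in> Qhat (i 0) (j 0)" using assms(1) by (simp add: Qhat_inter_def)
    then have "x \<in> {0..<1}" using Qhat_subset_unit by blast
    define m where "m = nat \<lfloor>2^N * x\<rfloor>"
    have "dyad N m \<in> Dn N" "x \<in> dyad N m"
      using mem_dyad_floor \<open>x \<in> {0..<1}\<close> by (auto simp: Dn_def m_def)
    moreover have "dyad N m \<subseteq> Qhat (i l) (j l)" if "l < k" for l
      using dyad_subset_Qhat[OF levels[OF that] \<open>x \<in> dyad N m\<close>] x that
      by (simp add: Qhat_inter_def)
    then have "dyad N m \<subseteq> Qhat_inter k i j" by (auto simp: Qhat_inter_def)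
    ultimately show "x \<in> \<Union>{I \<in> Dn N. I \<subseteq> Qhat_inter k i j}" by blast
  qed
qed auto

lemma card_le_if_diff_bounded:
  fixes S :: "int set" and q L :: int
  assumes q: "q > 0" and bounded: "\<And>x y. x \<in> S \<Longrightarrow> y \<in> S \<Longrightarrow> (x - y) * q \<le> L"
  shows "finite S \<and> card S \<le> nat (L div q + 1)"
proof (cases "S = {}")
  case False
  have diff: "x - y \<le> L div q" if "x \<in> S" "y \<in> S" for x y
    using zdiv_mono1[OF bounded[OF that] q] q by simp
  obtain y where "y \<in> S" using False by blast
  then have "S \<subseteq> {y - L div q .. y + L div q}" using diff by fastforce
  then have fin: "finite S" using finite_subset by blast
  moreover have "Min S \<in> S" "\<And>x. x \<in> S \<Longrightarrow> Min S \<le> x" using fin False by simp_all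
  ultimately have "S \<subseteq> {Min S .. Min S + L div q}" using diff by fastforce
  then show ?thesis using fin card_mono[of "{Min S .. Min S + L div q}" S] by simp
qed simp

lemma card_Qcluster_le:
  assumes "1 \<le> i"
  shows "finite (Qcluster i j p) \<and> card (Qcluster i j p) \<le> 6"
proof -
  define a :: int where "a = 2^i - 1"
  have "(2::int) ^ 1 \<le> 2^i" using assms by (rule power_increasing) simp
  then have a: "1 \<le> a" by (simp add: a_def)
  have "finite (int ` Qcluster i j p) \<and> card (int ` Qcluster i j p) \<le> nat ((3*a + 2) div a + 1)"
  proof (rule card_le_if_diff_bounded)
    fix x y assume "x \<in> int ` Qcluster i j p" "y \<in> int ` Qcluster i j p"
    then show "(x - y) * a \<le> 3*a + 2" by (auto simp: Qcluster_def a_def algebra_simps)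
  qed (use a in simp)
  moreover have "(3*a + 2) div a \<le> (5*a) div a" using a by (intro zdiv_mono1) auto
  then have "nat ((3*a + 2) div a + 1) \<le> 6" using a by simp
  ultimately show ?thesis by (simp add: card_image finite_image_iff)
qed

lemma div_eq_imp_diff_less:
  fixes a b e :: nat
  assumes "a div e = b div e" "e > 0"
  shows "int a - int b < int e"
proof -
  have "a = b div e * e + a mod e" using div_mult_mod_eq[of a e] assms(1) by simp
  then have "a < b div e * e + e" using mod_less_divisor[OF assms(2), of a] by linarith
  moreover have "b div e * e \<le> b" by (rule div_times_less_eq_dividend)
  ultimately have "a < b + e" by linarith
  then show ?thesis by linarith
qed

lemma zdiv_less_if_less_mult:
  fixes L R t :: int
  assumes "L < R * t" "0 < R"
  shows "L div R < t"
proof -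
  have "R * (L div R) \<le> L"
    using pos_mod_sign[OF assms(2), of L] by (simp flip: minus_mod_eq_mult_div)
  then have "R * (L div R) < R * t" using assms(1) by linarith
  then show ?thesis by (rule mult_left_less_imp_less) (use assms(2) in simp)
qed

lemma card_Qclusters_meeting_block_le:
  assumes "n \<le> i" "1 \<le> j"
  shows "finite {p. \<exists>m' \<in> Qcluster i j p. m' div 2^(i+j-n) = m}
    \<and> card {p. \<exists>m' \<in> Qcluster i j p. m' div 2^(i+j-n) = m} \<le> 2 * 2^(i - n)"
proof -
  define e :: nat where "e = 2^(i+j-n)"
  define R :: int where "R = 2^(i+j)"
  define W :: int where "W = 2^i"
  define L where "L = (W - 1) * (int e - 1) + 3*W - 1"
  have clusters: "finite {p. \<exists>m' \<in> Qcluster i j p. m' div e = m}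
    \<and> card {p. \<exists>m' \<in> Qcluster i j p. m' div e = m} \<le> nat (L div R + 1)"
  proof (rule card_le_if_diff_bounded)
    fix p1 p2
    assume "p1 \<in> {p. \<exists>m' \<in> Qcluster i j p. m' div e = m}"
      and "p2 \<in> {p. \<exists>m' \<in> Qcluster i j p. m' div e = m}"
    then obtain m1 m2 where m: "m1 \<in> Qcluster i j p1" "m2 \<in> Qcluster i j p2" "m1 div e = m2 div e"
      by auto
    have "int m1 - int m2 \<le> int e - 1" using div_eq_imp_diff_less[OF m(3)] by (simp add: e_def)
    then have "(W - 1) * (int m1 - int m2) \<le> (W - 1) * (int e - 1)"
      by (simp add: W_def mult_left_mono)
    then show "(p1 - p2) * R \<le> L"
      using m(1,2) by (simp add: Qcluster_def L_def R_def W_def algebra_simps)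
  qed (simp add: R_def)
  have "L < R * (2^(i-n) + 1)"
  proof -
    txt \<open>Across the block, (2^i - 1) m moves by less than 2^i e = R 2^(i-n).\<close>
    have "W * int e = R * 2^(i-n)" using assms by (simp add: W_def R_def e_def flip: power_add)
    moreover have "2 * W \<le> R"
      using power_increasing[OF assms(2), of "2::int"] by (simp add: W_def R_def power_add)
    moreover have "1 \<le> int e" by (simp add: e_def)
    ultimately show ?thesis by (simp add: L_def algebra_simps)
  qed
  then have "L div R < 2^(i-n) + 1" by (rule zdiv_less_if_less_mult) (simp add: R_def)
  moreover have "(1::int) \<le> 2^(i-n)" by simp
  ultimately have "L div R + 1 \<le> 2 * 2^(i-n)" by linarith
  then have "nat (L div R + 1) \<le> 2 * 2^(i-n)" by (simp add: nat_le_iff)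
  then show ?thesis using clusters by (simp add: e_def)
qed

definition Qchildren :: "nat \<Rightarrow> nat \<Rightarrow> nat \<Rightarrow> nat \<Rightarrow> nat set" where
  "Qchildren n i j m = {m' \<in> Qindex i j. m' div 2^(i+j-n) = m}"

lemma card_Qchildren_le:
  assumes "n \<le> i" "1 \<le> i" "1 \<le> j"
  shows "finite (Qchildren n i j m) \<and> card (Qchildren n i j m) \<le> 12 * 2^(i - n)"
proof -
  define P where "P = {p. \<exists>m' \<in> Qcluster i j p. m' div 2^(i+j-n) = m}"
  have P: "finite P" "card P \<le> 2 * 2^(i - n)"
    using card_Qclusters_meeting_block_le[OF assms(1,3)] by (simp_all add: P_def)
  have clusters: "finite (Qcluster i j p)" "card (Qcluster i j p) \<le> 6" for p
    using card_Qcluster_le[OF assms(2)] by simp_all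
  have sub: "Qchildren n i j m \<subseteq> (\<Union>p\<in>P. Qcluster i j p)"
    unfolding Qchildren_def Qindex_def P_def by blast
  then have "card (Qchildren n i j m) \<le> card (\<Union>p\<in>P. Qcluster i j p)"
    using P clusters by (intro card_mono) auto
  also have "\<dots> \<le> (\<Sum>p\<in>P. card (Qcluster i j p))" by (rule card_UN_le) (rule P)
  also have "\<dots> \<le> card P * 6"
    using sum_bounded_above[of P "\<lambda>p. card (Qcluster i j p)" 6] clusters by simp
  also have "\<dots> \<le> 12 * 2^(i - n)" using P by simp
  finally show ?thesis using sub P clusters by (meson finite_UN_I finite_subset)
qed

lemma level_le_later_index:
  assumes gap: "\<And>l. Suc l < k \<Longrightarrow> int (i (Suc l)) - int (i l) \<ge> int (j l)"
  shows "l' < l \<Longrightarrow> l < k \<Longrightarrow> i l' + j l' \<le> i l"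
proof (induction l)
  case (Suc l)
  have "i l + j l \<le> i (Suc l)" using gap[OF Suc.prems(2)] by linarith
  then show ?case using Suc by (cases "l' = l") auto
qed simp

lemma level_mono:
  assumes "\<And>l. Suc l < k \<Longrightarrow> int (i (Suc l)) - int (i l) \<ge> int (j l)"
    and "l' \<le> l" "l < k"
  shows "i l' + j l' \<le> i l + j l"
  using level_le_later_index[where i=i and j=j and k=k, of l' l] assms by (cases "l' = l") auto

definition Qtree :: "(nat \<Rightarrow> nat) \<Rightarrow> (nat \<Rightarrow> nat) \<Rightarrow> nat \<Rightarrow> nat set" where
  "Qtree i j l = {m. m < 2^(i l + j l)
     \<and> (\<forall>l' \<le> l. m div 2^(i l + j l - (i l' + j l')) \<in> Qindex (i l') (j l'))}"

lemma Qtree_Suc_subset: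
  assumes levels: "\<And>l'. l' \<le> l \<Longrightarrow> i l' + j l' \<le> i l + j l"
    and refines: "i l + j l \<le> i (Suc l)"
  shows "Qtree i j (Suc l)
    \<subseteq> (\<Union>m \<in> Qtree i j l. Qchildren (i l + j l) (i (Suc l)) (j (Suc l)) m)"
proof
  fix m' assume m': "m' \<in> Qtree i j (Suc l)"
  let ?lev = "\<lambda>l. i l + j l"
  define D where "D = ?lev (Suc l) - ?lev l"
  define m where "m = m' div 2^D"
  have D: "?lev (Suc l) = ?lev l + D" using refines by (simp add: D_def)
  have "m' < 2^(?lev l) * 2^D" using m' D by (simp add: Qtree_def power_add)
  then have "m < 2^(?lev l)" unfolding m_def by (rule less_mult_imp_div_less)
  moreover have "m div 2^(?lev l - ?lev l') \<in> Qindex (i l') (j l')" if "l' \<le> l" for l'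
  proof -
    have "?lev (Suc l) - ?lev l' = D + (?lev l - ?lev l')" using D levels[OF that] by simp
    then have "m div 2^(?lev l - ?lev l') = m' div 2^(?lev (Suc l) - ?lev l')"
      by (simp add: m_def power_add div_mult2_eq)
    then show ?thesis using m' that by (simp add: Qtree_def)
  qed
  ultimately have "m \<in> Qtree i j l" by (simp add: Qtree_def)
  moreover have "m' div 2^(?lev (Suc l) - ?lev (Suc l)) \<in> Qindex (i (Suc l)) (j (Suc l))"
    using m' unfolding Qtree_def by blast
  then have "m' \<in> Qchildren (?lev l) (i (Suc l)) (j (Suc l)) m"
    by (simp add: Qchildren_def m_def D_def)
  ultimately show "m' \<in> (\<Union>m \<in> Qtree i j l. Qchildren (?lev l) (i (Suc l)) (j (Suc l)) m)" by blast
qed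

lemma card_Qtree_Suc_le:
  assumes "\<And>l'. l' \<le> l \<Longrightarrow> i l' + j l' \<le> i l + j l" "i l + j l \<le> i (Suc l)"
    and "1 \<le> i (Suc l)" "1 \<le> j (Suc l)" and "finite (Qtree i j l)"
  shows "finite (Qtree i j (Suc l))
    \<and> card (Qtree i j (Suc l)) \<le> card (Qtree i j l) * (12 * 2^(i (Suc l) - (i l + j l)))"
proof -
  let ?C = "Qchildren (i l + j l) (i (Suc l)) (j (Suc l))"
  have children: "finite (?C m)" "card (?C m) \<le> 12 * 2^(i (Suc l) - (i l + j l))" for m
    using card_Qchildren_le assms(2-4) by simp_all
  have sub: "Qtree i j (Suc l) \<subseteq> (\<Union>m \<in> Qtree i j l. ?C m)"
    by (rule Qtree_Suc_subset[OF assms(1,2)])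
  moreover have fin: "finite (\<Union>m \<in> Qtree i j l. ?C m)" using assms(5) children by blast
  ultimately have "card (Qtree i j (Suc l)) \<le> card (\<Union>m \<in> Qtree i j l. ?C m)"
    by (rule card_mono[rotated])
  also have "\<dots> \<le> (\<Sum>m \<in> Qtree i j l. card (?C m))" by (rule card_UN_le) (rule assms(5))
  also have "\<dots> \<le> card (Qtree i j l) * (12 * 2^(i (Suc l) - (i l + j l)))"
    using sum_bounded_above[of "Qtree i j l" "\<lambda>m. card (?C m)"] children by simp
  finally show ?thesis using sub fin finite_subset by blast
qed

lemma card_Qtree_le:
  assumes "1 \<le> i 0" and jpos: "\<And>l. l < k \<Longrightarrow> 1 \<le> j l"
    and gap: "\<And>l. Suc l < k \<Longrightarrow> int (i (Suc l)) - int (i l) \<ge> int (j l)"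
  shows "l < k \<Longrightarrow> finite (Qtree i j l)
    \<and> card (Qtree i j l) * 2^(\<Sum>l'<l. j l') \<le> 12^Suc l * 2^(i l)"
proof (induction l)
  case 0
  have sub: "Qtree i j 0 \<subseteq> Qchildren 0 (i 0) (j 0) 0" by (auto simp: Qtree_def Qchildren_def)
  moreover have "finite (Qchildren 0 (i 0) (j 0) 0)"
    "card (Qchildren 0 (i 0) (j 0) 0) \<le> 12 * 2^(i 0)"
    using card_Qchildren_le[of 0 "i 0" "j 0" 0] assms(1) jpos[OF 0] by simp_all
  ultimately show ?case using card_mono[OF _ sub] finite_subset[OF sub] by simp
next
  case (Suc l)
  let ?lev = "\<lambda>l. i l + j l"
  have levels: "?lev l' \<le> ?lev l" if "l' \<le> l" for l'
    using level_mono[where i=i and j=j and k=k] gap that Suc.prems by simp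
  have refines: "?lev l \<le> i (Suc l)" and "?lev 0 \<le> i (Suc l)"
    using level_le_later_index[where i=i and j=j and k=k] gap Suc.prems by simp_all
  then have "1 \<le> i (Suc l)" using assms(1) by simp
  moreover have IH: "finite (Qtree i j l)"
    "card (Qtree i j l) * 2^(\<Sum>l'<l. j l') \<le> 12^Suc l * 2^(i l)"
    using Suc by simp_all
  ultimately have step: "finite (Qtree i j (Suc l))"
    "card (Qtree i j (Suc l)) \<le> card (Qtree i j l) * (12 * 2^(i (Suc l) - ?lev l))"
    using card_Qtree_Suc_le[OF levels refines] jpos[OF Suc.prems] by simp_all
  have "card (Qtree i j (Suc l)) * 2^(\<Sum>l'<Suc l. j l')
      \<le> card (Qtree i j l) * (12 * 2^(i (Suc l) - ?lev l)) * 2^(\<Sum>l'<Suc l. j l')"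
    using step(2) by (rule mult_right_mono) simp
  also have "\<dots> = (card (Qtree i j l) * 2^(\<Sum>l'<l. j l')) * (12 * 2^(j l) * 2^(i (Suc l) - ?lev l))"
    by (simp add: power_add)
  also have "\<dots> \<le> 12^Suc l * 2^(i l) * (12 * 2^(j l) * 2^(i (Suc l) - ?lev l))"
    using IH(2) by (rule mult_right_mono) simp
  also have "\<dots> = 12^Suc (Suc l) * 2^(i l + j l + (i (Suc l) - ?lev l))"
    by (simp add: power_add)
  also have "\<dots> = 12^Suc (Suc l) * 2^(i (Suc l))"
    using refines by simp
  finally show ?case using step(1) by blast
qed

lemma dyad_subset_Qhat_inter_imp_Qtree:
  assumes "l < k" and levels: "\<And>l'. l' \<le> l \<Longrightarrow> i l' + j l' \<le> i l + j l"
    and "m < 2^(i l + j l)" "dyad (i l + j l) m \<subseteq> Qhat_inter k i j"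
  shows "m \<in> Qtree i j l"
proof -
  have "dyad (i l + j l) m \<subseteq> Qhat (i l') (j l')" if "l' \<le> l" for l'
    using assms(1,4) that by (auto simp: Qhat_inter_def)
  then show ?thesis using assms(3) levels dyad_subset_Qhat_imp_Qindex by (simp add: Qtree_def)
qed

lemma real_le_powr_if_mult_pow2_le:
  assumes "c * 2^s \<le> C * (2::nat)^t"
  shows "real c \<le> real C * 2 powr (real t - real s)"
proof -
  have "real (c * 2^s) \<le> real (C * 2^t)" using assms by (simp only: of_nat_le_iff)
  then show ?thesis by (simp add: powr_diff powr_realpow field_simps)
qed

theorem lemma4p4:
  fixes k :: nat and i j :: "nat \<Rightarrow> nat" and M :: real
  assumes M: "M = 15"
    and k: "k \<ge> 1"
    and i1: "1 \<le> i 0"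
    and imono: "\<And>l. Suc l < k \<Longrightarrow> i l < i (Suc l)"
    and jpos: "\<And>l. l < k \<Longrightarrow> j l \<ge> 1"
    and gap: "\<And>l. Suc l < k \<Longrightarrow> int (i (Suc l)) - int (i l) \<ge> int (j l)"
  shows "\<exists>S. S \<subseteq> Dn (i (k - 1) + j (k - 1)) \<and> finite S \<and>
           Qhat_inter k i j = \<Union> S \<and>
           real (card S) \<le> M ^ k * 2 powr (real (i (k - 1)) - (\<Sum>l<k - 1. real (j l)))"
proof -
  define N where "N = i (k - 1) + j (k - 1)"
  define S where "S = {I \<in> Dn N. I \<subseteq> Qhat_inter k i j}"
  define s where "s = (\<Sum>l<k - 1. j l)"
  have levels: "i l + j l \<le> N" if "l < k" for l
    using level_mono[where i=i and j=j and k=k, of l "k - 1"] gap that k by (simp add: N_def)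
  have "S \<subseteq> dyad N ` Qtree i j (k - 1)"
    using dyad_subset_Qhat_inter_imp_Qtree[of "k - 1" k i j] levels k
    by (auto simp: S_def Dn_def N_def)
  moreover have tree: "finite (Qtree i j (k - 1))"
    "card (Qtree i j (k - 1)) * 2^s \<le> 12^k * 2^(i (k - 1))"
    using card_Qtree_le[of i k j, OF i1 jpos gap, of "k - 1"] k by (simp_all add: s_def)
  ultimately have "card S \<le> card (Qtree i j (k - 1))"
    by (meson card_image_le card_mono finite_imageI le_trans)
  then have "card S * 2^s \<le> 12^k * 2^(i (k - 1))"
    using tree(2) by (meson le_trans mult_le_mono1)
  then have "real (card S) \<le> real (12^k) * 2 powr (real (i (k - 1)) - real s)"
    by (rule real_le_powr_if_mult_pow2_le)
  also have "\<dots> \<le> M ^ k * 2 powr (real (i (k - 1)) - (\<Sum>l<k - 1. real (j l)))"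
    by (simp add: M s_def power_mono)
  finally have "real (card S) \<le> M ^ k * 2 powr (real (i (k - 1)) - (\<Sum>l<k - 1. real (j l)))" .
  moreover have "S \<subseteq> Dn N" "finite S" by (auto simp: S_def Dn_def)
  moreover have "Qhat_inter k i j = \<Union> S"
    unfolding S_def using Qhat_inter_eq_Union_Dn[of k i j N, OF k levels] .
  ultimately show ?thesis unfolding N_def by blast
qed

end
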